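(* $R_{\mathcal{S}^*_{Ne}}(\mathcal{C})=2/5$, where $\mathcal{C}$ is the class of convex functions; the bound is sharp for $h(z)=z/(1-z)$, which satisfies $\mathcal{Q}_h(2/5)=5/3\in\partial\Omega_{Ne}$.
   Context: $\mathbb{D}=\{|z|<1\}$, $\mathbb{D}_r=\{|z|<r\}$. $\mathcal{A}$ is the class of analytic $f$ on $\mathbb{D}$ with $f(0)=0$, $f'(0)=1$; for $f\in\mathcal{A}$ let $\mathcal{Q}_f(z)=zf'(z)/f(z)$. $\mathcal{C}=\{f\in\mathcal{A}:\mathrm{Re}(1+zf''(z)/f'(z))>0,\ z\in\mathbb{D}\}$. Let $\varphi_{Ne}(z)=1+z-z^3/3$ (univalent on $\mathbb{D}$), $\Omega_{Ne}=\varphi_{Ne}(\mathbb{D})$, and $\mathcal{S}^*_{Ne}=\{f\in\mathcal{A}:\mathcal{Q}_f\prec\varphi_{Ne}\}$, where $F\prec G$ means $F=G\circ w$ for some analytic $w:\mathbb{D}\to\mathbb{D}$, $w(0)=0$. For $\mathcal{G}\subset\mathcal{A}$, $R_{\mathcal{S}^*_{Ne}}(\mathcal{G})$ is the largest $\rho\in(0,1]$ such that $\mathcal{Q}_f(\mathbb{D}_\rho)\subseteq\Omega_{Ne}$ for all $f\in\mathcal{G}$ (equivalently $r^{-1}f(rz)\in\mathcal{S}^*_{Ne}$ for all $f\in\mathcal{G}$, $0<r\le\rho$). *)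

theory Defs
  imports "HOL-Analysis.Analysis"
begin

definition classA :: "(complex \<Rightarrow> complex) set" where
  "classA = {f. f holomorphic_on ball 0 1 \<and> f 0 = 0 \<and> deriv f 0 = 1}"

text \<open>Q_f(z) = z f'(z) / f(z); at z = 0 the removable value 1 is used.\<close>
definition Qf :: "(complex \<Rightarrow> complex) \<Rightarrow> complex \<Rightarrow> complex" where
  "Qf f z = (if z = 0 then 1 else z * deriv f z / f z)"

definition convexClass :: "(complex \<Rightarrow> complex) set" where
  "convexClass = {f \<in> classA. \<forall>z \<in> ball 0 1.
      Re (1 + z * deriv (deriv f) z / deriv f z) > 0}"

definition phiNe :: "complex \<Rightarrow> complex" where
  "phiNe z = 1 + z - z ^ 3 / 3"

definition OmegaNe :: "complex set" where
  "OmegaNe = phiNe ` ball 0 1"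

definition radiusSNe :: "(complex \<Rightarrow> complex) set \<Rightarrow> real" where
  "radiusSNe G = (GREATEST \<rho>. 0 < \<rho> \<and> \<rho> \<le> 1 \<and>
      (\<forall>f \<in> G. Qf f ` ball 0 \<rho> \<subseteq> OmegaNe))"

end

theory Submission
  imports Defs "HOL-Complex_Analysis.Complex_Analysis"
begin

text \<open>For convex \<open>f\<close> the function \<open>w = 1 - f/(z f')\<close> maps the disc into itself: at a first
  point with \<open>|w| = 1\<close> Jack's lemma gives \<open>z w' = k w\<close> with \<open>k \<ge> 1\<close>, which makes
  \<open>Re (1 + z f''/f') = Re ((1 + k w)/(1 - w)) \<le> 0\<close>. Hence \<open>Q_f = 1/(1 - w)\<close> with \<open>|w(z)| \<le> |z|\<close>
  by Schwarz's lemma, and for \<open>|z| < 2/5\<close> the value \<open>Q_f(z)\<close> lies in the disc \<open>|v - 1| < 2/3\<close>,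
  which is contained in \<open>\<Omega>_Ne\<close> because \<open>3z - z^3\<close> attains every value of modulus \<open>< 2\<close> in the
  unit disc. Conversely every real point of \<open>\<Omega>_Ne\<close> is smaller than \<open>5/3 = \<phi>_Ne(1)\<close>, and
  \<open>h(z) = z/(1 - z)\<close> has \<open>Q_h(2/5) = 5/3\<close>.\<close>

lemma phiNe_real_value_lt:
  assumes "z \<in> ball 0 1" and "phiNe z = complex_of_real x"
  shows "x < 5/3"
proof -
  obtain a b where z: "z = Complex a b" by (cases z)
  have disc: "a^2 + b^2 < 1" using assms(1) z by (simp add: cmod_def)
  have "Im (phiNe z) = b * (1 - a^2 + b^2/3)"
    using z by (simp add: phiNe_def power3_eq_cube power2_eq_square field_simps)
  moreover have "1 - a^2 + b^2/3 > 0" using disc zero_le_power2[of b] by linarith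
  ultimately have b: "b = 0" using assms(2) by simp
  have "\<bar>a\<bar> < 1" using disc b abs_square_less_1[of a] by (simp add: power2_eq_square)
  then have "(a - 1)^2 * (a + 2) > 0" by (intro mult_pos_pos) auto
  moreover have "x = 1 + a - a^3/3"
    using assms(2) z b by (simp add: phiNe_def power3_eq_cube complex_eq_iff)
  ultimately show ?thesis by (simp add: power2_eq_square power3_eq_cube algebra_simps)
qed

lemma real_in_OmegaNe_imp_lt: "complex_of_real x \<in> OmegaNe \<Longrightarrow> x < 5/3"
  unfolding OmegaNe_def using phiNe_real_value_lt by (metis imageE)

text \<open>The cubic \<open>3z - z^3 = c\<close> has a root in the unit disc once \<open>|c| < 2\<close>: Brouwer's theorem
  applied to \<open>z \<mapsto> (z^3 + c)/3\<close>, which maps the closed disc into the disc of radius \<open>(1+|c|)/3 < 1\<close>.\<close>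
lemma ball_subset_OmegaNe: "ball 1 (2/3) \<subseteq> OmegaNe"
proof
  fix v :: complex assume "v \<in> ball 1 (2/3)"
  define c where "c = 3 * (v - 1)"
  have "norm c = 3 * dist 1 v" by (simp only: c_def norm_mult) (simp add: dist_norm norm_minus_commute)
  then have c: "norm c < 2" using \<open>v \<in> ball 1 (2/3)\<close> by simp
  define T where "T = (\<lambda>z::complex. (z^3 + c)/3)"
  have bnd: "norm (T z) \<le> (1 + norm c)/3" if "z \<in> cball 0 1" for z
  proof -
    have "norm (z^3) \<le> 1" using that by (simp add: norm_power power_le_one)
    moreover have "norm (z^3 + c) \<le> norm (z^3) + norm c" by (rule norm_triangle_ineq)
    ultimately show ?thesis by (simp add: T_def norm_divide)
  qed
  have "continuous_on (cball 0 1) T" unfolding T_def by (intro continuous_intros) auto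
  moreover have "T \<in> cball 0 1 \<rightarrow> cball 0 1" using bnd c by fastforce
  ultimately obtain z where z: "z \<in> cball 0 1" "T z = z"
    using brouwer_ball[OF zero_less_one] by blast
  have "z \<in> ball 0 1" using bnd[OF z(1)] z(2) c by simp
  moreover have "phiNe z = v"
    using z(2) by (simp add: T_def phiNe_def c_def field_simps)
  ultimately show "v \<in> OmegaNe" unfolding OmegaNe_def by blast
qed

lemma inverse_one_minus_in_OmegaNe:
  assumes "norm \<zeta> < 2/5"
  shows "1 / (1 - \<zeta>) \<in> OmegaNe"
proof -
  have "1 - 1 / (1 - \<zeta>) = - (\<zeta> / (1 - \<zeta>))"
  proof -
    have "1 - \<zeta> \<noteq> 0" using assms by auto
    then show ?thesis by (simp add: field_simps)
  qed
  then have "dist 1 (1 / (1 - \<zeta>)) = norm \<zeta> / norm (1 - \<zeta>)" by (simp add: dist_norm norm_divide)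
  also have "\<dots> \<le> norm \<zeta> / (1 - norm \<zeta>)"
    using assms norm_triangle_ineq2[of 1 \<zeta>] by (intro divide_left_mono mult_pos_pos) auto
  also have "\<dots> < 2/3" using assms by (simp add: field_simps)
  finally show ?thesis using ball_subset_OmegaNe by auto
qed

lemma five_thirds_notin_OmegaNe: "(5/3 :: complex) \<notin> OmegaNe"
  using real_in_OmegaNe_imp_lt[of "5/3"] by auto

lemma five_thirds_in_frontier_OmegaNe: "(5/3 :: complex) \<in> frontier OmegaNe"
proof -
  have "phiNe ` closure (ball 0 1) \<subseteq> closure OmegaNe"
    unfolding OmegaNe_def
    by (rule image_closure_subset) (auto simp: phiNe_def intro!: continuous_intros closure_subset)
  moreover have "phiNe 1 = 5/3" by (simp add: phiNe_def)
  ultimately have "(5/3 :: complex) \<in> closure OmegaNe" by force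
  then show ?thesis using five_thirds_notin_OmegaNe interior_subset unfolding frontier_def by blast
qed

definition convex_extremal :: "complex \<Rightarrow> complex" where
  "convex_extremal z = z / (1 - z)"

lemma deriv_convex_extremal:
  assumes "z \<noteq> 1"
  shows "deriv convex_extremal z = 1 / (1 - z)^2"
proof (rule DERIV_imp_deriv)
  show "(convex_extremal has_field_derivative 1 / (1 - z)^2) (at z)"
    unfolding convex_extremal_def
    by (rule derivative_eq_intros refl)+ (use assms in \<open>auto simp: field_simps eval_nat_numeral\<close>)
qed

lemma deriv2_convex_extremal:
  assumes "z \<noteq> 1"
  shows "deriv (deriv convex_extremal) z = 2 / (1 - z)^3"
proof -
  have "\<forall>\<^sub>F x in nhds z. x \<noteq> 1" using assms by (simp add: eventually_nhds_conv_at eventually_neq_at_within)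
  then have "\<forall>\<^sub>F x in nhds z. deriv convex_extremal x = 1 / (1 - x)^2"
    by eventually_elim (simp add: deriv_convex_extremal)
  then have "deriv (deriv convex_extremal) z = deriv (\<lambda>x. 1 / (1 - x)^2) z"
    by (rule deriv_cong_ev) simp
  also have "\<dots> = 2 / (1 - z)^3"
  proof (rule DERIV_imp_deriv)
    show "((\<lambda>x. 1 / (1 - x)^2) has_field_derivative 2 / (1 - z)^3) (at z)"
      by (rule derivative_eq_intros refl)+
        (use assms in \<open>simp_all add: divide_simps\<close>, simp add: algebra_simps eval_nat_numeral)
  qed
  finally show ?thesis .
qed

lemma convex_extremal_in_convexClass: "convex_extremal \<in> convexClass"
proof -
  have "Re (1 + z * deriv (deriv convex_extremal) z / deriv convex_extremal z) > 0"
    if "z \<in> ball 0 1" for z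
  proof -
    have z: "norm z < 1" "z \<noteq> 1" using that by auto
    \<comment> \<open>naming \<open>1 - z\<close> keeps \<open>field_simps\<close> from expanding its powers\<close>
    define u where "u = 1 - z"
    have "u \<noteq> 0" "u + z = 1" using z by (auto simp: u_def)
    then have "1 + z * (2 / u^3) / (1 / u^2) = (1 + z) / u"
      by (simp add: field_simps power2_eq_square power3_eq_cube)
    then have "1 + z * deriv (deriv convex_extremal) z / deriv convex_extremal z = (1 + z) / (1 - z)"
      unfolding u_def using z by (simp add: deriv_convex_extremal deriv2_convex_extremal)
    moreover have "Re ((1 + z) / (1 - z)) = (1 - (norm z)^2) / (norm (1 - z))^2"
    proof -
      have "Re (1 + z) * Re (1 - z) + Im (1 + z) * Im (1 - z) = 1 - (norm z)^2"
        using cmod_power2[of z] by (simp add: algebra_simps power2_eq_square)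
      then show ?thesis by (simp add: Re_divide cmod_power2)
    qed
    ultimately show ?thesis using z by (simp add: abs_square_less_1 divide_pos_pos)
  qed
  moreover have "convex_extremal holomorphic_on ball 0 1"
    unfolding convex_extremal_def by (intro holomorphic_intros) auto
  ultimately show ?thesis
    by (simp add: convexClass_def classA_def deriv_convex_extremal convex_extremal_def)
qed

lemma Qf_convex_extremal:
  assumes "z \<noteq> 0" "z \<noteq> 1"
  shows "Qf convex_extremal z = 1 / (1 - z)"
proof -
  define u where "u = 1 - z"
  have "u \<noteq> 0" using assms by (simp add: u_def)
  then have "z * (1 / u^2) / (z / u) = 1 / u"
    using assms by (simp add: field_simps power2_eq_square)
  then show ?thesis
    unfolding u_def using assms by (simp add: Qf_def deriv_convex_extremal convex_extremal_def)
qed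

lemma Im_deriv_eq_0_at_circle_max:
  assumes D: "(g has_field_derivative D) (at z0)"
    and max: "\<And>s::real. Re (g (z0 * exp (\<i> * of_real s)) * c) \<le> Re (g z0 * c)"
  shows "Im (z0 * D * c) = 0"
proof -
  have "((\<lambda>s. z0 * exp (\<i> * s)) has_field_derivative z0 * \<i>) (at 0)"
    by (rule derivative_eq_intros refl | simp)+
  moreover have "(g has_field_derivative D) (at (z0 * exp (\<i> * 0)))" using D by simp
  ultimately have "((\<lambda>s. g (z0 * exp (\<i> * s))) has_field_derivative D * (z0 * \<i>)) (at 0)"
    by (rule DERIV_chain')
  from DERIV_cmult_right[OF this, of c]
  have "((\<lambda>s. g (z0 * exp (\<i> * s)) * c) has_field_derivative \<i> * (z0 * D * c)) (at (of_real 0))"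
    by (simp add: ac_simps)
  then have "((\<lambda>s. Re (g (z0 * exp (\<i> * of_real s)) * c)) has_real_derivative - Im (z0 * D * c)) (at 0)"
    using has_field_derivative_Re[OF has_vector_derivative_real_field] by fastforce
  moreover have "\<forall>s. \<bar>0 - s\<bar> < 1 \<longrightarrow> Re (g (z0 * exp (\<i> * of_real s)) * c) \<le> Re (g (z0 * exp (\<i> * of_real 0)) * c)"
    using max by simp
  ultimately have "- Im (z0 * D * c) = 0" by (rule DERIV_local_max[OF _ zero_less_one])
  then show ?thesis by simp
qed

lemma Re_radial_deriv_ge:
  assumes D: "(g has_field_derivative D) (at z0)"
    and below: "\<And>t::real. 0 < t \<Longrightarrow> t < 1 \<Longrightarrow> Re (g (of_real t * z0) * c) \<le> t * Re (g z0 * c)"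
  shows "Re (g z0 * c) \<le> Re (z0 * D * c)"
proof -
  define h where "h t = Re (g (of_real t * z0) * c)" for t
  have "((\<lambda>s. s * z0) has_field_derivative z0) (at 1)"
    by (rule derivative_eq_intros refl | simp)+
  moreover have "(g has_field_derivative D) (at (1 * z0))" using D by simp
  ultimately have "((\<lambda>s. g (s * z0)) has_field_derivative D * z0) (at 1)"
    by (rule DERIV_chain')
  from DERIV_cmult_right[OF this, of c]
  have "((\<lambda>s. g (s * z0) * c) has_field_derivative z0 * D * c) (at (of_real 1))"
    by (simp add: ac_simps)
  then have "(h has_real_derivative Re (z0 * D * c)) (at 1)"
    unfolding h_def using has_field_derivative_Re[OF has_vector_derivative_real_field] by fastforce
  then have "((\<lambda>t. (h t - h 1) / (t - 1)) \<longlongrightarrow> Re (z0 * D * c)) (at_left 1)"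
    using has_field_derivative_at_within[of h _ 1 "{..<1}"] by (simp add: has_field_derivative_iff)
  moreover have "\<forall>\<^sub>F t in at_left 1. h 1 \<le> (h t - h 1) / (t - 1)"
    using eventually_at_left_real[OF zero_less_one]
  proof (rule eventually_mono)
    fix t :: real assume "t \<in> {0<..<1}"
    then show "h 1 \<le> (h t - h 1) / (t - 1)"
      using below[of t] by (simp add: h_def le_divide_eq algebra_simps)
  qed
  ultimately have "h 1 \<le> Re (z0 * D * c)" by (rule tendsto_lowerbound) simp
  then show ?thesis by (simp add: h_def)
qed

lemma Schwarz_Lemma_ball:
  assumes holw: "w holomorphic_on ball 0 \<rho>" and w0: "w 0 = 0"
    and bounded: "\<And>z. norm z < \<rho> \<Longrightarrow> norm (w z) < 1" and z: "norm z < \<rho>"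
  shows "norm (w z) \<le> norm z / \<rho>"
proof -
  have "0 < \<rho>" using z by (meson le_less_trans norm_ge_zero)
  define u where "u \<zeta> = w (of_real \<rho> * \<zeta>)" for \<zeta>
  have "(\<lambda>\<zeta>::complex. of_real \<rho> * \<zeta>) ` ball 0 1 \<subseteq> ball 0 \<rho>"
  proof (rule image_subsetI)
    fix \<zeta> :: complex assume "\<zeta> \<in> ball 0 1"
    then show "of_real \<rho> * \<zeta> \<in> ball 0 \<rho>" using \<open>0 < \<rho>\<close> by (simp add: norm_mult)
  qed
  then have holu: "u holomorphic_on ball 0 1"
    unfolding u_def using holomorphic_on_compose_gen[OF _ holw, of "\<lambda>\<zeta>. of_real \<rho> * \<zeta>" "ball 0 1"]
    by (simp add: o_def holomorphic_intros)
  have "norm (u \<zeta>) < 1" if "norm \<zeta> < 1" for \<zeta>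
    using bounded that \<open>0 < \<rho>\<close> by (simp add: u_def norm_mult)
  from Schwarz_Lemma(1)[OF holu _ this, of "z / of_real \<rho>"]
  show ?thesis using w0 z \<open>0 < \<rho>\<close> by (simp add: u_def norm_divide)
qed

lemma Jack_lemma:
  assumes holw: "w holomorphic_on ball 0 r" and w0: "w 0 = 0"
    and z0: "norm z0 < r" "norm (w z0) = 1"
    and inside: "\<And>z. norm z < norm z0 \<Longrightarrow> norm (w z) < 1"
  shows "\<exists>k\<ge>1. z0 * deriv w z0 = of_real k * w z0"
proof -
  define c where "c = cnj (w z0)"
  have wc: "w z0 * c = 1"
    using complex_norm_square[of "w z0"] z0(2) by (simp add: c_def)
  have D: "(w has_field_derivative deriv w z0) (at z0)"
    using holw z0(1) by (intro holomorphic_derivI[OF holw open_ball]) simp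
  have "z0 \<noteq> 0" using z0(2) w0 by auto
  have cball_sub: "cball 0 (norm z0) \<subseteq> ball 0 r" using z0(1) by auto
  have "continuous_on (closure (ball 0 (norm z0))) w"
    using \<open>z0 \<noteq> 0\<close> cball_sub holomorphic_on_imp_continuous_on[OF holw]
    by (auto intro: continuous_on_subset)
  then have le1: "norm (w z) \<le> 1" if "norm z \<le> norm z0" for z
    by (rule continuous_on_closure_norm_le) (use inside that \<open>z0 \<noteq> 0\<close> in \<open>auto simp: less_imp_le\<close>)
  have "Im (z0 * deriv w z0 * c) = 0"
  proof (rule Im_deriv_eq_0_at_circle_max[OF D])
    fix s :: real
    have "Re (w (z0 * exp (\<i> * s)) * c) \<le> norm (w (z0 * exp (\<i> * s)) * c)"
      by (rule complex_Re_le_cmod)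
    also have "\<dots> \<le> 1" using le1 z0(2) by (simp add: norm_mult c_def)
    finally show "Re (w (z0 * exp (\<i> * s)) * c) \<le> Re (w z0 * c)" using wc by simp
  qed
  moreover have "1 \<le> Re (z0 * deriv w z0 * c)"
  proof -
    have "w holomorphic_on ball 0 (norm z0)"
      using holomorphic_on_subset[OF holw] ball_subset_cball cball_sub by blast
    then have Schwarz: "norm (w (of_real t * z0)) \<le> t" if "0 < t" "t < 1" for t
      using Schwarz_Lemma_ball[of w "norm z0" "of_real t * z0"] w0 inside that \<open>z0 \<noteq> 0\<close>
      by (simp add: norm_mult)
    have "Re (w z0 * c) \<le> Re (z0 * deriv w z0 * c)"
    proof (rule Re_radial_deriv_ge[OF D])
      fix t :: real assume t: "0 < t" "t < 1"
      have "Re (w (of_real t * z0) * c) \<le> norm (w (of_real t * z0) * c)"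
        by (rule complex_Re_le_cmod)
      also have "\<dots> \<le> t" using Schwarz[OF t] z0(2) by (simp add: norm_mult c_def)
      finally show "Re (w (of_real t * z0) * c) \<le> t * Re (w z0 * c)" using wc by simp
    qed
    then show ?thesis using wc by simp
  qed
  moreover have "z0 * deriv w z0 = z0 * deriv w z0 * c * w z0"
    using wc by (simp add: ac_simps)
  ultimately have "z0 * deriv w z0 = of_real (Re (z0 * deriv w z0 * c)) * w z0"
    by (metis complex_is_Real_iff of_real_Re)
  then show ?thesis using \<open>1 \<le> Re (z0 * deriv w z0 * c)\<close> by blast
qed

lemma Jack_norm_lt_1:
  assumes holw: "w holomorphic_on ball 0 r" and w0: "w 0 = 0"
    and no_exit: "\<And>z k. norm z < r \<Longrightarrow> norm (w z) = 1 \<Longrightarrow> 1 \<le> k \<Longrightarrow>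
                    z * deriv w z \<noteq> of_real k * w z"
    and z: "norm z < r"
  shows "norm (w z) < 1"
proof (rule ccontr)
  assume "\<not> norm (w z) < 1"
  define S where "S = cball 0 (norm z) \<inter> w -` {v. 1 \<le> norm v}"
  have cball_sub: "cball 0 (norm z) \<subseteq> ball 0 r" using z by auto
  have cont: "continuous_on (cball 0 (norm z)) w"
    using continuous_on_subset[OF holomorphic_on_imp_continuous_on[OF holw] cball_sub] .
  have "closed S" unfolding S_def
    by (rule continuous_closed_preimage[OF cont]) (auto intro: closed_Collect_le continuous_intros)
  moreover have "z \<in> S" using \<open>\<not> norm (w z) < 1\<close> by (simp add: S_def)
  ultimately obtain z0 where "z0 \<in> S" and least: "\<And>y. y \<in> S \<Longrightarrow> dist 0 z0 \<le> dist 0 y"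
    using distance_attains_inf[of S 0] by blast
  then have z0: "norm z0 \<le> norm z" "1 \<le> norm (w z0)" by (auto simp: S_def)
  have "z0 \<noteq> 0" using z0(2) w0 by auto
  have inside: "norm (w y) < 1" if "norm y < norm z0" for y
    using least[of y] that z0(1) by (force simp: S_def)
  have "continuous_on (closure (ball 0 (norm z0))) w"
    using \<open>z0 \<noteq> 0\<close> z0(1) by (auto intro: continuous_on_subset[OF cont])
  then have "norm (w z0) \<le> 1"
    by (rule continuous_on_closure_norm_le) (use inside \<open>z0 \<noteq> 0\<close> in \<open>auto simp: less_imp_le\<close>)
  then have "norm (w z0) = 1" using z0(2) by simp
  moreover have "norm z0 < r" using z0(1) z by simp
  ultimately obtain k where "1 \<le> k" "z0 * deriv w z0 = of_real k * w z0"
    using Jack_lemma[OF holw w0 _ _ inside] by blast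
  then show False using no_exit \<open>norm z0 < r\<close> \<open>norm (w z0) = 1\<close> by blast
qed

definition divz :: "(complex \<Rightarrow> complex) \<Rightarrow> complex \<Rightarrow> complex" where
  "divz f z = (if z = 0 then deriv f 0 else f z / z)"

definition schwarz_fn :: "(complex \<Rightarrow> complex) \<Rightarrow> complex \<Rightarrow> complex" where
  "schwarz_fn f z = 1 - divz f z / deriv f z"

lemma holomorphic_on_divz:
  assumes "f holomorphic_on S" "open S" "f 0 = 0"
  shows "divz f holomorphic_on S"
proof -
  have "divz f = (\<lambda>z. if z = 0 then deriv f 0 else (f z - f 0) / (z - 0))"
    using assms(3) by (auto simp: divz_def)
  then show ?thesis using pole_lemma_open[OF assms(1,2)] by simp
qed

lemma mult_divz: "f 0 = 0 \<Longrightarrow> z * divz f z = f z"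
  by (simp add: divz_def)

lemma Qf_eq_inverse_schwarz_fn:
  assumes "deriv f z \<noteq> 0" "divz f z \<noteq> 0"
  shows "Qf f z = 1 / (1 - schwarz_fn f z)"
  using assms by (cases "z = 0") (simp_all add: Qf_def schwarz_fn_def divz_def)

lemma schwarz_fn_0: "f \<in> classA \<Longrightarrow> schwarz_fn f 0 = 0"
  by (simp add: schwarz_fn_def divz_def classA_def)

lemma holomorphic_on_schwarz_fn:
  assumes f: "f \<in> classA" and "r \<le> 1" and nz: "\<And>z. z \<in> ball 0 r \<Longrightarrow> deriv f z \<noteq> 0"
  shows "schwarz_fn f holomorphic_on ball 0 r"
proof -
  have holf: "f holomorphic_on ball 0 r"
    using f \<open>r \<le> 1\<close> by (auto simp: classA_def intro: holomorphic_on_subset)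
  show ?thesis unfolding schwarz_fn_def
    using f nz holomorphic_on_divz[OF holf] holomorphic_deriv[OF holf]
    by (auto simp: classA_def intro!: holomorphic_intros)
qed

text \<open>With \<open>w = 1 - f/(z f')\<close> one has \<open>f = (1 - w) z f'\<close>; differentiating this relation
  expresses the convexity quotient through \<open>w\<close>.\<close>
lemma convexity_quotient_schwarz_fn:
  assumes holf: "f holomorphic_on S" and S: "open S" "z \<in> S"
    and nz: "z \<noteq> 0" "f z \<noteq> 0" "deriv f z \<noteq> 0"
  shows "1 + z * deriv (deriv f) z / deriv f z
           = (1 + z * deriv (schwarz_fn f) z) / (1 - schwarz_fn f z)"
proof -
  define a b c where "a = f z" and "b = deriv f z" and "c = deriv (deriv f) z"
  have fD: "(f has_field_derivative b) (at z)"
    unfolding b_def by (rule holomorphic_derivI[OF holf S])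
  have f'D: "(deriv f has_field_derivative c) (at z)"
    unfolding c_def by (rule holomorphic_derivI[OF holomorphic_deriv[OF holf S(1)] S])
  define D where "D = - ((b * (z * b) - a * (b + z * c)) / (z * b)^2)"
  have "((\<lambda>x. 1 - f x / (x * deriv f x)) has_field_derivative D) (at z)"
    unfolding D_def
    by (rule derivative_eq_intros refl fD f'D)+ (use nz in \<open>auto simp: a_def b_def power2_eq_square\<close>)
  then have "(schwarz_fn f has_field_derivative D) (at z)"
  proof (rule has_field_derivative_transform_within_open)
    show "open (S - {0})" "z \<in> S - {0}" using S nz by auto
  qed (auto simp: schwarz_fn_def divz_def)
  then have dw: "deriv (schwarz_fn f) z = D" by (rule DERIV_imp_deriv)
  have w: "schwarz_fn f z = 1 - (a / z) / b" by (simp add: schwarz_fn_def divz_def nz a_def b_def)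
  show ?thesis
    unfolding dw w D_def using nz by (simp add: a_def b_def c_def field_simps power2_eq_square)
qed

lemma Re_Jack_quotient_nonpos:
  fixes w :: complex and k :: real
  assumes "norm w = 1" "1 \<le> k" "w \<noteq> 1"
  shows "Re ((1 + of_real k * w) / (1 - w)) \<le> 0"
proof -
  have circle: "(Re w)^2 + (Im w)^2 = 1" using assms(1) cmod_power2[of w] by simp
  have "Re w \<le> 1" using complex_Re_le_cmod[of w] assms(1) by simp
  have "Re (1 + of_real k * w) * Re (1 - w) + Im (1 + of_real k * w) * Im (1 - w)
          = (1 + k * Re w) * (1 - Re w) - k * ((Re w)^2 + (Im w)^2) + k * (Re w)^2"
    by (simp add: algebra_simps power2_eq_square)
  also have "\<dots> = - ((k - 1) * (1 - Re w))" using circle by (simp add: algebra_simps power2_eq_square)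
  finally show ?thesis
    unfolding Re_divide' using assms(2) \<open>Re w \<le> 1\<close> by (simp add: divide_nonpos_nonneg)
qed

lemma convexClass_norm_schwarz_fn_lt_1:
  assumes f: "f \<in> convexClass" and "r \<le> 1"
    and nz: "\<And>z. z \<in> ball 0 r \<Longrightarrow> deriv f z \<noteq> 0 \<and> divz f z \<noteq> 0"
    and z: "norm z < r"
  shows "norm (schwarz_fn f z) < 1"
proof -
  have fA: "f \<in> classA" using f by (simp add: convexClass_def)
  then have holf: "f holomorphic_on ball 0 1" and "f 0 = 0" by (auto simp: classA_def)
  show ?thesis
  proof (rule Jack_norm_lt_1[OF holomorphic_on_schwarz_fn[OF fA \<open>r \<le> 1\<close>] schwarz_fn_0[OF fA] _ z])
    fix z0 and k :: real assume z0: "norm z0 < r" "norm (schwarz_fn f z0) = 1" and "1 \<le> k"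
    let ?w = "schwarz_fn f z0"
    have nz0: "deriv f z0 \<noteq> 0" "divz f z0 \<noteq> 0" using nz z0(1) by auto
    have "z0 \<noteq> 0" using z0(2) schwarz_fn_0[OF fA] by auto
    moreover have "f z0 \<noteq> 0" using nz0 mult_divz[of f z0] \<open>f 0 = 0\<close> \<open>z0 \<noteq> 0\<close> by auto
    moreover have "z0 \<in> ball 0 1" using z0(1) \<open>r \<le> 1\<close> by simp
    ultimately have quot: "1 + z0 * deriv (deriv f) z0 / deriv f z0
                             = (1 + z0 * deriv (schwarz_fn f) z0) / (1 - ?w)"
      using convexity_quotient_schwarz_fn[OF holf] nz0 by simp
    have "?w \<noteq> 1" using nz0 by (simp add: schwarz_fn_def)
    have "0 < Re (1 + z0 * deriv (deriv f) z0 / deriv f z0)"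
      using f \<open>z0 \<in> ball 0 1\<close> by (simp add: convexClass_def)
    then show "z0 * deriv (schwarz_fn f) z0 \<noteq> of_real k * ?w"
      using Re_Jack_quotient_nonpos[OF z0(2) \<open>1 \<le> k\<close> \<open>?w \<noteq> 1\<close>] quot by auto
  qed (use nz in auto)
qed

lemma convexClass_norm_deriv_minus_divz_lt:
  assumes f: "f \<in> convexClass" and "r \<le> 1"
    and nz: "\<And>z. z \<in> ball 0 r \<Longrightarrow> deriv f z \<noteq> 0 \<and> divz f z \<noteq> 0"
    and z: "z \<in> ball 0 r"
  shows "norm (deriv f z - divz f z) < norm (deriv f z)"
proof -
  have "norm (schwarz_fn f z) < 1"
    by (rule convexClass_norm_schwarz_fn_lt_1[OF f \<open>r \<le> 1\<close> nz]) (use z in auto)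
  moreover have "deriv f z - divz f z = schwarz_fn f z * deriv f z"
    using nz[OF z] by (simp add: schwarz_fn_def field_simps)
  ultimately show ?thesis using nz[OF z] by (simp add: norm_mult)
qed

lemma Re_mult_cnj_nonneg_if_norm_diff_le:
  fixes a b :: complex
  assumes "norm (a - b) \<le> norm a"
  shows "0 \<le> Re (a * cnj b)"
proof -
  have "(norm (a - b))^2 \<le> (norm a)^2" using assms by (simp add: power_mono)
  then have "(Re a - Re b)^2 + (Im a - Im b)^2 \<le> (Re a)^2 + (Im a)^2" by (simp add: cmod_power2)
  then have "(Re b)^2 + (Im b)^2 \<le> 2 * (Re a * Re b + Im a * Im b)"
    by (simp add: power2_diff algebra_simps)
  moreover have "0 \<le> (Re b)^2 + (Im b)^2" by simp
  ultimately have "0 \<le> 2 * (Re a * Re b + Im a * Im b)" by (rule order_trans[rotated])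
  then show ?thesis by simp
qed

lemma Re_ray_deriv_mult_cnj_nonneg:
  assumes f0: "f 0 = 0" and "0 \<le> t"
    and dom: "norm (deriv f (of_real t * z) - divz f (of_real t * z)) \<le> norm (deriv f (of_real t * z))"
  shows "0 \<le> Re (z * deriv f (of_real t * z) * cnj (f (of_real t * z)))"
proof -
  define p where "p = of_real t * z"
  have "cnj (f p) = cnj p * cnj (divz f p)" using mult_divz[of f p] f0 by (metis complex_cnj_mult)
  then have "z * deriv f p * cnj (f p) = (z * cnj p) * (deriv f p * cnj (divz f p))"
    by (simp add: ac_simps)
  also have "z * cnj p = of_real (t * (norm z)^2)"
    using complex_norm_square[of z] by (simp add: p_def ac_simps)
  finally have "Re (z * deriv f p * cnj (f p)) = t * (norm z)^2 * Re (deriv f p * cnj (divz f p))"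
    by (simp only: times_complex.sel Re_complex_of_real Im_complex_of_real mult_zero_left diff_0_right)
  moreover have "0 \<le> Re (deriv f p * cnj (divz f p))"
    using dom unfolding p_def by (rule Re_mult_cnj_nonneg_if_norm_diff_le)
  ultimately show ?thesis using \<open>0 \<le> t\<close> unfolding p_def by simp
qed

lemma norm_nondecreasing_along_ray:
  assumes holf: "f holomorphic_on ball 0 1" and z: "norm z < 1"
    and nonneg: "\<And>t::real. 0 < t \<Longrightarrow> t < 1 \<Longrightarrow>
                   0 \<le> Re (z * deriv f (of_real t * z) * cnj (f (of_real t * z)))"
    and s: "0 < s" "s \<le> 1"
  shows "norm (f (of_real s * z)) \<le> norm (f z)"
proof -
  define N where "N t = (Re (f (of_real t * z)))^2 + (Im (f (of_real t * z)))^2" for t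
  have seg: "of_real t * z \<in> ball 0 1" if "0 \<le> t" "t \<le> 1" for t
    using that z by (simp add: norm_mult mult_le_one le_less_trans[OF mult_left_le_one_le])
  have "continuous_on {s..1} (\<lambda>t. f (of_real t * z))"
    by (rule continuous_on_compose2[OF holomorphic_on_imp_continuous_on[OF holf]])
       (use seg s in \<open>auto intro!: continuous_intros\<close>)
  then have "continuous_on {s..1} N" unfolding N_def by (intro continuous_intros)
  moreover have "\<exists>y. (N has_real_derivative y) (at t) \<and> 0 \<le> y" if t: "s < t" "t < 1" for t
  proof -
    define p where "p = of_real t * z"
    define d where "d = z * deriv f p"
    have "((\<lambda>x. x * z) has_field_derivative z) (at (of_real t))"
      by (rule derivative_eq_intros refl | simp)+
    moreover have "(f has_field_derivative deriv f p) (at (of_real t * z))"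
      using holomorphic_derivI[OF holf open_ball seg] t s by (simp add: p_def)
    ultimately have "((\<lambda>x. f (x * z)) has_field_derivative d) (at (of_real t))"
      using DERIV_chain' by (fastforce simp: d_def mult.commute)
    then have dRe: "((\<lambda>x. Re (f (of_real x * z))) has_real_derivative Re d) (at t)"
      and dIm: "((\<lambda>x. Im (f (of_real x * z))) has_real_derivative Im d) (at t)"
      by (rule has_field_derivative_Re[OF has_vector_derivative_real_field]
               has_field_derivative_Im[OF has_vector_derivative_real_field])+
    have "(N has_real_derivative 2 * Re (d * cnj (f p))) (at t)"
      using DERIV_add[OF DERIV_power[OF dRe, of 2] DERIV_power[OF dIm, of 2]]
      unfolding N_def p_def by (simp add: algebra_simps)
    moreover have "0 \<le> Re (d * cnj (f p))" using nonneg t s by (simp add: d_def p_def)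
    ultimately show ?thesis by auto
  qed
  ultimately have "N s \<le> N 1" using DERIV_nonneg_imp_increasing_open[of s 1 N] s by blast
  then show ?thesis by (simp add: N_def cmod_def)
qed

text \<open>Convexity in the sense of \<open>convexClass\<close> is vacuous where \<open>f'\<close> vanishes (division by zero
  yields 0), so non-vanishing of \<open>f'\<close> and \<open>f(z)/z\<close> has to be derived. On the disc below the first
  zero \<open>zs\<close> Jack's lemma gives \<open>|f' - f/z| < |f'|\<close>; at \<open>zs\<close> this forces \<open>f(zs) = 0\<close>, while it also
  makes \<open>|f|\<close> nondecreasing along the ray to \<open>zs\<close>, so \<open>f\<close> would vanish on the smaller disc.\<close>
lemma convexClass_deriv_divz_nonzero:
  assumes f: "f \<in> convexClass" and z: "z \<in> ball 0 1"
  shows "deriv f z \<noteq> 0 \<and> divz f z \<noteq> 0"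
proof (rule ccontr)
  assume bad: "\<not> (deriv f z \<noteq> 0 \<and> divz f z \<noteq> 0)"
  have "f \<in> classA" using f by (simp add: convexClass_def)
  then have holf: "f holomorphic_on ball 0 1" and f0: "f 0 = 0" and f'0: "deriv f 0 = 1"
    by (auto simp: classA_def)
  have cont_f': "continuous_on (ball 0 1) (deriv f)"
    using holomorphic_deriv[OF holf open_ball] by (rule holomorphic_on_imp_continuous_on)
  have cont_divz: "continuous_on (ball 0 1) (divz f)"
    using holomorphic_on_divz[OF holf open_ball f0] by (rule holomorphic_on_imp_continuous_on)
  have cball_sub: "cball 0 (norm z) \<subseteq> ball 0 1" using z by auto
  define S where "S = (cball 0 (norm z) \<inter> deriv f -` {0}) \<union> (cball 0 (norm z) \<inter> divz f -` {0})"
  have "closed S" unfolding S_def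
    by (intro closed_Un continuous_closed_preimage continuous_on_subset[OF cont_f' cball_sub]
        continuous_on_subset[OF cont_divz cball_sub]) auto
  moreover have "z \<in> S" using bad by (auto simp: S_def)
  ultimately obtain zs where "zs \<in> S" and least: "\<And>y. y \<in> S \<Longrightarrow> dist 0 zs \<le> dist 0 y"
    using distance_attains_inf[of S 0] by blast
  define r where "r = norm zs"
  have "zs \<noteq> 0" using \<open>zs \<in> S\<close> f'0 by (auto simp: S_def divz_def)
  then have "0 < r" by (simp add: r_def)
  have "r < 1" using \<open>zs \<in> S\<close> z by (auto simp: S_def r_def)
  have good: "deriv f y \<noteq> 0 \<and> divz f y \<noteq> 0" if "y \<in> ball 0 r" for y
    using least[of y] that \<open>zs \<in> S\<close> by (force simp: S_def r_def)
  have dom: "norm (deriv f y - divz f y) < norm (deriv f y)" if "y \<in> ball 0 r" for y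
    by (rule convexClass_norm_deriv_minus_divz_lt[OF f _ good that]) (use \<open>r < 1\<close> in simp)
  have "cball 0 r \<subseteq> ball 0 1" using \<open>r < 1\<close> by auto
  then have "continuous_on (closure (ball 0 r)) (\<lambda>y. norm (deriv f y - divz f y) - norm (deriv f y))"
    using \<open>0 < r\<close> continuous_on_subset[OF cont_f'] continuous_on_subset[OF cont_divz]
    by (auto intro!: continuous_intros)
  then have "norm (deriv f zs - divz f zs) - norm (deriv f zs) \<le> 0"
    by (rule continuous_le_on_closure) (use dom \<open>0 < r\<close> in \<open>auto simp: r_def less_imp_le\<close>)
  then have "divz f zs = 0" using \<open>zs \<in> S\<close> by (auto simp: S_def)
  then have "f zs = 0" using mult_divz[of f zs] f0 by simp
  have "norm (f (of_real (1/2) * zs)) \<le> norm (f zs)"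
  proof (rule norm_nondecreasing_along_ray[OF holf])
    fix t :: real assume "0 < t" "t < 1"
    then have "of_real t * zs \<in> ball 0 r" using \<open>0 < r\<close> by (simp add: r_def norm_mult)
    then show "0 \<le> Re (zs * deriv f (of_real t * zs) * cnj (f (of_real t * zs)))"
      using dom \<open>0 < t\<close> by (intro Re_ray_deriv_mult_cnj_nonneg f0 less_imp_le)
  qed (use \<open>r < 1\<close> in \<open>auto simp: r_def\<close>)
  moreover have "of_real (1/2) * zs \<in> ball 0 r" "of_real (1/2) * zs \<noteq> 0"
    using \<open>zs \<noteq> 0\<close> by (auto simp: r_def norm_mult)
  ultimately show False
    using \<open>f zs = 0\<close> good mult_divz[of f "of_real (1/2) * zs"] f0 by auto
qed

lemma Qf_convexClass_in_OmegaNe: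
  assumes f: "f \<in> convexClass" and z: "norm z < 2/5"
  shows "Qf f z \<in> OmegaNe"
proof -
  have fA: "f \<in> classA" using f by (simp add: convexClass_def)
  have nz: "deriv f y \<noteq> 0 \<and> divz f y \<noteq> 0" if "y \<in> ball 0 1" for y
    using convexClass_deriv_divz_nonzero[OF f that] .
  have "norm (schwarz_fn f z) \<le> norm z"
  proof (rule Schwarz_Lemma(1)[OF holomorphic_on_schwarz_fn[OF fA order_refl] schwarz_fn_0[OF fA]])
    show "norm (schwarz_fn f y) < 1" if "norm y < 1" for y
      using convexClass_norm_schwarz_fn_lt_1[OF f order_refl nz that] .
  qed (use nz z in auto)
  then have "1 / (1 - schwarz_fn f z) \<in> OmegaNe"
    using z by (intro inverse_one_minus_in_OmegaNe) simp
  then show ?thesis using nz[of z] z by (simp add: Qf_eq_inverse_schwarz_fn)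
qed

lemma radiusSNe_eqI:
  assumes "0 < \<rho>" "\<rho> \<le> 1" and "\<And>f. f \<in> G \<Longrightarrow> Qf f ` ball 0 \<rho> \<subseteq> OmegaNe"
    and sharp: "\<And>\<rho>'. \<rho> < \<rho>' \<Longrightarrow> \<rho>' \<le> 1 \<Longrightarrow> \<exists>f\<in>G. \<exists>z\<in>ball 0 \<rho>'. Qf f z \<notin> OmegaNe"
  shows "radiusSNe G = \<rho>"
  unfolding radiusSNe_def
proof (rule Greatest_equality)
  fix \<rho>' :: real assume "0 < \<rho>' \<and> \<rho>' \<le> 1 \<and> (\<forall>f\<in>G. Qf f ` ball 0 \<rho>' \<subseteq> OmegaNe)"
  then show "\<rho>' \<le> \<rho>" using sharp by (meson image_subset_iff not_le)
qed (use assms in blast)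

theorem mainTheorem5:
  shows "radiusSNe convexClass = 2 / 5
    \<and> (\<lambda>z. z / (1 - z)) \<in> convexClass
    \<and> Qf (\<lambda>z. z / (1 - z)) (complex_of_real (2 / 5)) = 5 / 3
    \<and> (5 / 3 :: complex) \<in> frontier OmegaNe"
proof -
  have extremal: "(\<lambda>z. z / (1 - z)) = convex_extremal" by (simp add: fun_eq_iff convex_extremal_def)
  have Qf_extremal: "Qf convex_extremal (of_real (2/5)) = 5/3"
    using Qf_convex_extremal[of "of_real (2/5)"] by simp
  have "radiusSNe convexClass = 2/5"
  proof (rule radiusSNe_eqI)
    fix \<rho>' :: real assume "2/5 < \<rho>'"
    then have "(of_real (2/5) :: complex) \<in> ball 0 \<rho>'" by simp
    then show "\<exists>f\<in>convexClass. \<exists>z\<in>ball 0 \<rho>'. Qf f z \<notin> OmegaNe"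
      using convex_extremal_in_convexClass Qf_extremal five_thirds_notin_OmegaNe by metis
  qed (auto intro: Qf_convexClass_in_OmegaNe)
  then show ?thesis
    unfolding extremal using convex_extremal_in_convexClass Qf_extremal five_thirds_in_frontier_OmegaNe
    by blast
qed

end
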